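(* Let $\mathcal A\in\mathbb C^{n_1\times n_2\times n_3}$, $\mathcal A^-\in\mathcal A\{1\}$ and $\mathcal X\in\mathbb C^{n_2\times n_1\times n_3}$. The following are equivalent: (a) $\mathcal X=\mathcal A^-\mathcal A\mathcal A^*$; (b) $\mathcal X\mathcal A\mathcal A^\dagger=\mathcal X$ and $\mathcal X(\mathcal A^\dagger)^*=\mathcal A^-\mathcal A$; (c) $\mathcal X\mathcal A\mathcal A^\dagger=\mathcal X$ and $\mathcal X\mathcal A=\mathcal A^-\mathcal A\mathcal A^*\mathcal A$; (d) $\mathcal A^-\mathcal A\mathcal X\mathcal A\mathcal A^\dagger=\mathcal X$ and $\mathcal A\mathcal X(\mathcal A^\dagger)^*=\mathcal A$.
   Context: Fix a nonsingular matrix $M\in\mathbb C^{n_3\times n_3}$. For $\mathcal C\in\mathbb C^{n_1\times n_2\times n_3}$ let $\widehat{\mathcal C}=\mathcal C\times_3M$, i.e. $\widehat{\mathcal C}_{ijk}=\sum_{l=1}^{n_3}M_{kl}\mathcal C_{ijl}$, and let $\widehat{\mathcal C}^{(i)}$ denote its $i$-th frontal slice. The M-product $\mathcal C\star_M\mathcal D$ of $\mathcal C\in\mathbb C^{n_1\times n_2\times n_3}$ and $\mathcal D\in\mathbb C^{n_2\times l\times n_3}$ is the unique tensor with $\widehat{\mathcal C\star_M\mathcal D}^{(i)}=\widehat{\mathcal C}^{(i)}\widehat{\mathcal D}^{(i)}$ for all $i\in[n_3]$. Juxtaposition of tensors denotes the M-product. The conjugate transpose $\mathcal A^*$ is defined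 by $\widehat{\mathcal A^*}^{(i)}=(\widehat{\mathcal A}^{(i)})^*$. The Moore–Penrose inverse $\mathcal A^\dagger$ is the unique $\mathcal W$ satisfying $\mathcal A\mathcal W\mathcal A=\mathcal A$, $\mathcal W\mathcal A\mathcal W=\mathcal W$, $(\mathcal A\mathcal W)^*=\mathcal A\mathcal W$, $(\mathcal W\mathcal A)^*=\mathcal W\mathcal A$. $\mathcal A\{1\}$ is the set of all $\mathcal W$ with $\mathcal A\mathcal W\mathcal A=\mathcal A$. *)

theory Defs
  imports "Jordan_Normal_Form.Matrix" "Jordan_Normal_Form.Determinant"
begin

text \<open>Third-order complex tensors are represented as functions
  nat => nat => nat => complex; a tensor lies in C^(n1 x n2 x n3) iff it
  vanishes outside the index box. The transform matrix M is a complex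
  n3 x n3 matrix (n3 = dim_row M).\<close>

type_synonym tensor = "nat \<Rightarrow> nat \<Rightarrow> nat \<Rightarrow> complex"

definition tensor_in :: "nat \<Rightarrow> nat \<Rightarrow> nat \<Rightarrow> tensor \<Rightarrow> bool" where
  "tensor_in n1 n2 n3 A \<longleftrightarrow>
     (\<forall>i j k. (n1 \<le> i \<or> n2 \<le> j \<or> n3 \<le> k) \<longrightarrow> A i j k = 0)"

definition tensor_hat :: "complex mat \<Rightarrow> tensor \<Rightarrow> tensor" where
  "tensor_hat M C = (\<lambda>i j k. if k < dim_row M
      then (\<Sum>l<dim_row M. M $$ (k, l) * C i j l) else 0)"

text \<open>M-product of C (n1 x n x n3) and D (n x l x n3): the unique tensor
  whose transformed frontal slices are the products of the transformed slices.
  The argument n is the inner dimension.\<close>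
definition mprod :: "complex mat \<Rightarrow> nat \<Rightarrow> tensor \<Rightarrow> tensor \<Rightarrow> tensor" where
  "mprod M n C D = (THE W. (\<forall>i j k. dim_row M \<le> k \<longrightarrow> W i j k = 0) \<and>
      (\<forall>i j k. k < dim_row M \<longrightarrow>
         tensor_hat M W i j k = (\<Sum>t<n. tensor_hat M C i t k * tensor_hat M D t j k)))"

definition tconj :: "complex mat \<Rightarrow> tensor \<Rightarrow> tensor" where
  "tconj M A = (THE W. (\<forall>i j k. dim_row M \<le> k \<longrightarrow> W i j k = 0) \<and>
      (\<forall>i j k. k < dim_row M \<longrightarrow> tensor_hat M W i j k = cnj (tensor_hat M A j i k)))"

definition mp_inv :: "complex mat \<Rightarrow> nat \<Rightarrow> nat \<Rightarrow> tensor \<Rightarrow> tensor" where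
  "mp_inv M n1 n2 A = (THE W. tensor_in n2 n1 (dim_row M) W \<and>
      mprod M n1 (mprod M n2 A W) A = A \<and>
      mprod M n2 (mprod M n1 W A) W = W \<and>
      tconj M (mprod M n2 A W) = mprod M n2 A W \<and>
      tconj M (mprod M n1 W A) = mprod M n1 W A)"

definition inner1 :: "complex mat \<Rightarrow> nat \<Rightarrow> nat \<Rightarrow> tensor \<Rightarrow> tensor set" where
  "inner1 M n1 n2 A = {W. tensor_in n2 n1 (dim_row M) W \<and>
      mprod M n1 (mprod M n2 A W) A = A}"

end

theory Submission
  imports Defs
begin

(* M-products, conjugate transposes and the Penrose equations all act separately on the
   transformed frontal slices, and since M is invertible a tensor is determined by these slices.
   Slicewise, a {1,3}-inverse is built by adding one column at a time (Greville's recursion), and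
   A^(1,4) A A^(1,3) is then the Moore-Penrose inverse, which is unique; so A^dagger exists and
   satisfies the four Penrose equations. The four characterisations of A^- A A^* follow from
   these equations, associativity and (C D)^* = D^* C^* alone; for instance X A A^dagger = X
   and X (A^dagger)^* = A^- A give X = X A A^dagger = X (A^dagger)^* A^* = A^- A A^*. *)

type_synonym cfmat = "nat \<Rightarrow> nat \<Rightarrow> complex"

definition fmult :: "nat \<Rightarrow> cfmat \<Rightarrow> cfmat \<Rightarrow> cfmat" where
  "fmult k F G = (\<lambda>i j. \<Sum>t<k. F i t * G t j)"

definition fadj :: "cfmat \<Rightarrow> cfmat" where
  "fadj F = (\<lambda>i j. cnj (F j i))"

definition fbox :: "nat \<Rightarrow> nat \<Rightarrow> cfmat \<Rightarrow> bool" where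
  "fbox a b F \<longleftrightarrow> (\<forall>i j. a \<le> i \<or> b \<le> j \<longrightarrow> F i j = 0)"

lemma fmult_assoc: "fmult l (fmult k A B) C = fmult k A (fmult l B C)"
  by (auto simp: fmult_def sum_distrib_left sum_distrib_right mult.assoc intro!: ext
      intro: sum.swap)

lemma fadj_fmult: "fadj (fmult k F G) = fmult k (fadj G) (fadj F)"
  by (auto simp: fmult_def fadj_def cnj_sum mult.commute intro!: ext)

lemma fadj_fadj [simp]: "fadj (fadj F) = F"
  by (simp add: fadj_def)

lemma fadj_zero [simp]: "fadj (\<lambda>i j. 0) = (\<lambda>i j. 0)"
  by (simp add: fadj_def)

lemma fmult_zero_left [simp]: "fmult k (\<lambda>i j. 0) F = (\<lambda>i j. 0)"
  by (simp add: fmult_def)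

lemma fmult_diff_right:
  "fmult k F (\<lambda>i j. G i j - H i j) = (\<lambda>i j. fmult k F G i j - fmult k F H i j)"
  by (auto simp: fmult_def right_diff_distrib sum_subtractf intro!: ext)

lemma fbox_fmult: "fbox a c F \<Longrightarrow> fbox c b G \<Longrightarrow> fbox a b (fmult k F G)"
  by (auto simp: fbox_def fmult_def)

lemma fbox_fadj: "fbox a b F \<Longrightarrow> fbox b a (fadj F)"
  by (auto simp: fbox_def fadj_def)

lemma sum_cnj_mult_self:
  fixes v :: "nat \<Rightarrow> complex"
  shows "(\<Sum>t<n. cnj (v t) * v t) = complex_of_real (\<Sum>t<n. (cmod (v t))\<^sup>2)"
  unfolding of_real_sum
  by (intro sum.cong refl) (simp add: complex_norm_square mult.commute del: of_real_power)

lemma sum_cnj_mult_self_nonzero: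
  fixes v :: "nat \<Rightarrow> complex"
  assumes "i < n" and "v i \<noteq> 0"
  shows "(\<Sum>t<n. cnj (v t) * v t) \<noteq> 0"
proof -
  have "(\<Sum>t<n. (cmod (v t))\<^sup>2) > 0"
    using assms by (intro sum_pos2[of _ i]) auto
  then show ?thesis
    unfolding sum_cnj_mult_self by (metis of_real_eq_0_iff order_less_irrefl)
qed

lemma fmult_residual:
  assumes "fmult n Q Q = Q"
  shows "fmult n Q (\<lambda>i j. V i j - fmult n Q V i j) = (\<lambda>i j. 0)"
proof -
  have "fmult n Q (fmult n Q V) = fmult n Q V"
    by (simp add: assms flip: fmult_assoc)
  then show ?thesis
    unfolding fmult_diff_right by simp
qed

lemma fadj_residual_fmult:
  assumes herm: "fadj Q = Q" and idem: "fmult n Q Q = Q" and fixes_B: "fmult n Q B = B"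
  shows "fmult n (fadj (\<lambda>i j. V i j - fmult n Q V i j)) B = (\<lambda>i j. 0)"
proof -
  let ?R = "\<lambda>i j. V i j - fmult n Q V i j"
  have "fmult n (fadj ?R) B = fmult n (fadj (fmult n Q ?R)) B"
    by (subst fixes_B [symmetric]) (simp add: fadj_fmult herm fmult_assoc)
  then show ?thesis
    by (simp add: fmult_residual [OF idem])
qed

lemma fadj_residual_fmult_self:
  assumes herm: "fadj Q = Q" and idem: "fmult n Q Q = Q"
  shows "fmult n (fadj (\<lambda>i j. V i j - fmult n Q V i j)) V
       = fmult n (fadj (\<lambda>i j. V i j - fmult n Q V i j)) (\<lambda>i j. V i j - fmult n Q V i j)"
proof -
  have "fmult n Q (fmult n Q V) = fmult n Q V"
    by (simp add: idem flip: fmult_assoc)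
  from fadj_residual_fmult [OF herm idem this, of V] show ?thesis
    unfolding fmult_diff_right by (auto simp: fun_eq_iff)
qed

lemma fmult_add_outer:
  assumes "\<And>i. (\<Sum>t<k. A i t * y t) = c i"
  shows "fmult k A (\<lambda>i j. G i j + y i * z j) = (\<lambda>i j. fmult k A G i j + c i * z j)"
proof (intro ext)
  fix i j
  have "fmult k A (\<lambda>i j. G i j + y i * z j) i j = (\<Sum>t<k. A i t * G t j + A i t * y t * z j)"
    unfolding fmult_def by (intro sum.cong refl) (simp add: algebra_simps)
  also have "\<dots> = fmult k A G i j + (\<Sum>t<k. A i t * y t) * z j"
    by (simp add: fmult_def sum.distrib sum_distrib_right)
  finally show "fmult k A (\<lambda>i j. G i j + y i * z j) i j = fmult k A G i j + c i * z j"
    by (simp only: assms)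
qed

lemma fmult_Suc_fbox: "fbox m n G \<Longrightarrow> fmult (Suc m) A G = fmult m A G"
  by (auto simp: fmult_def fbox_def)

(* With Q = A G the orthogonal projector onto the first m columns and c the residual of column m,
   the new inverse satisfies A G' = Q + c c^* / s, the projector onto all m + 1 columns. *)
lemma inverse13_add_independent_column:
  fixes c :: "nat \<Rightarrow> complex"
  assumes G: "fbox m n G" and c_out: "\<And>i. n \<le> i \<Longrightarrow> c i = 0"
    and herm: "fadj (fmult m A G) = fmult m A G"
    and fix_cols: "\<And>i j. j < m \<Longrightarrow> fmult n (fmult m A G) A i j = A i j"
    and last_col: "\<And>i. A i m = fmult n (fmult m A G) A i m + c i"
    and A_out: "\<And>i j. m < j \<Longrightarrow> A i j = 0"
    and orth: "\<And>j. (\<Sum>t<n. cnj (c t) * A t j) = (if j = m then s else 0)"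
    and s: "s \<noteq> 0" "cnj s = s"
  shows "\<exists>G'. fbox (Suc m) n G' \<and> fmult n (fmult (Suc m) A G') A = A \<and>
           fadj (fmult (Suc m) A G') = fmult (Suc m) A G'"
proof -
  define Q where "Q = fmult m A G"
  define y where "y t = (if t < m then - (\<Sum>l<n. G t l * A l m) else if t = m then 1 else 0)"
    for t
  define G' where "G' = (\<lambda>i j. G i j + y i * (cnj (c j) / s))"
  have Ay: "(\<Sum>t<Suc m. A i t * y t) = c i" for i
  proof -
    have "(\<Sum>t<m. A i t * y t) = - (\<Sum>t<m. \<Sum>l<n. A i t * G t l * A l m)"
      by (simp add: y_def sum_distrib_left sum_negf mult.assoc)
    also have "(\<Sum>t<m. \<Sum>l<n. A i t * G t l * A l m) = fmult n Q A i m"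
      by (simp add: Q_def fmult_def sum_distrib_right) (rule sum.swap)
    finally show ?thesis
      using last_col [of i] by (simp add: y_def Q_def)
  qed
  have AG': "fmult (Suc m) A G' = (\<lambda>i j. Q i j + c i * cnj (c j) / s)"
    unfolding G'_def fmult_add_outer [OF Ay] fmult_Suc_fbox [OF G] Q_def
    by (simp add: times_divide_eq_right)
  show ?thesis
  proof (intro exI conjI)
    show "fbox (Suc m) n G'"
      using G c_out by (auto simp: fbox_def G'_def y_def)
    have "cnj (Q j i) = Q i j" for i j
      using herm by (simp add: Q_def fadj_def fun_eq_iff)
    then show "fadj (fmult (Suc m) A G') = fmult (Suc m) A G'"
      unfolding AG' using s by (auto simp: fadj_def mult.commute intro!: ext)
    show "fmult n (fmult (Suc m) A G') A = A"
    proof (intro ext)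
      fix i j
      have "fmult n (fmult (Suc m) A G') A i j
          = fmult n Q A i j + c i / s * (\<Sum>t<n. cnj (c t) * A t j)"
        unfolding AG' by (simp add: fmult_def distrib_right sum.distrib sum_distrib_left mult.assoc)
      also have "\<dots> = A i j"
      proof (cases j m rule: linorder_cases)
        case less
        then show ?thesis using fix_cols orth by (simp add: Q_def)
      next
        case equal
        then show ?thesis using s(1) by (simp add: orth Q_def flip: last_col)
      next
        case greater
        then show ?thesis using A_out orth by (simp add: fmult_def)
      qed
      finally show "fmult n (fmult (Suc m) A G') A i j = A i j" .
    qed
  qed
qed

lemma inverse13_add_dependent_column:
  assumes G: "fbox m n G"
    and herm: "fadj (fmult m A G) = fmult m A G"
    and fix_cols: "\<And>i j. j < m \<Longrightarrow> fmult n (fmult m A G) A i j = A i j"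
    and last_col: "\<And>i. A i m = fmult n (fmult m A G) A i m"
    and A_out: "\<And>i j. m < j \<Longrightarrow> A i j = 0"
  shows "\<exists>G'. fbox (Suc m) n G' \<and> fmult n (fmult (Suc m) A G') A = A \<and>
           fadj (fmult (Suc m) A G') = fmult (Suc m) A G'"
proof (intro exI conjI)
  note AG = fmult_Suc_fbox [OF G]
  show "fbox (Suc m) n G"
    using G by (simp add: fbox_def)
  show "fadj (fmult (Suc m) A G) = fmult (Suc m) A G"
    using herm by (simp only: AG)
  show "fmult n (fmult (Suc m) A G) A = A"
  proof (intro ext)
    fix i j
    show "fmult n (fmult (Suc m) A G) A i j = A i j"
      unfolding AG using fix_cols [of j i] last_col [of i] A_out [of j]
      by (cases j m rule: linorder_cases) (simp_all add: fmult_def)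
  qed
qed

lemma fmult_idem_if_fixes_columns:
  assumes "\<And>i j. j < m \<Longrightarrow> fmult n (fmult m A G) A i j = A i j"
  shows "fmult n (fmult m A G) (fmult m A G) = fmult m A G"
proof -
  have "fmult n (fmult m A G) (fmult m A G) = fmult m (fmult n (fmult m A G) A) G"
    by (rule fmult_assoc [symmetric])
  also have "\<dots> = fmult m A G"
    using assms by (simp add: fmult_def)
  finally show ?thesis .
qed

lemma inverse13_add_column:
  assumes A: "fbox n (Suc m) A" and G: "fbox m n G"
    and herm: "fadj (fmult m A G) = fmult m A G"
    and fix_cols: "\<And>i j. j < m \<Longrightarrow> fmult n (fmult m A G) A i j = A i j"
  shows "\<exists>G'. fbox (Suc m) n G' \<and> fmult n (fmult (Suc m) A G') A = A \<and>
           fadj (fmult (Suc m) A G') = fmult (Suc m) A G'"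
proof -
  define Q where "Q = fmult m A G"
  have idem: "fmult n Q Q = Q"
    unfolding Q_def using fix_cols by (rule fmult_idem_if_fixes_columns)
  define c where "c i = A i m - fmult n Q A i m" for i
  define s where "s = (\<Sum>t<n. cnj (c t) * c t)"
  have residual: "(\<lambda>i j. A i m - fmult n Q (\<lambda>i j. A i m) i j) = (\<lambda>i j. c i)"
    by (simp add: c_def fmult_def)
  have A_out: "A i j = 0" if "m < j" for i j
    using A that by (simp add: fbox_def)
  have orth: "(\<Sum>t<n. cnj (c t) * A t j) = (if j = m then s else 0)" for j
  proof (cases j m rule: linorder_cases)
    case less
    have "fmult n Q (\<lambda>i k. A i j) = (\<lambda>i k. A i j)"
      using fix_cols less by (simp add: Q_def fmult_def)
    from fadj_residual_fmult [OF herm [folded Q_def] idem this, of "\<lambda>i k. A i m"] less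
    show ?thesis
      unfolding residual by (simp add: fmult_def fadj_def fun_eq_iff)
  next
    case equal
    from fadj_residual_fmult_self [OF herm [folded Q_def] idem, of "\<lambda>i k. A i m"] equal
    show ?thesis
      unfolding residual by (simp add: s_def fmult_def fadj_def fun_eq_iff)
  qed (simp add: A_out)
  have c_out: "c i = 0" if "n \<le> i" for i
    using that A G by (simp add: c_def Q_def fmult_def fbox_def)
  show ?thesis
  proof (cases "\<forall>i<n. c i = 0")
    case True
    have "A i m = fmult n (fmult m A G) A i m" for i
      using True c_out [of i] by (cases "i < n") (auto simp: c_def Q_def)
    then show ?thesis
      by (intro inverse13_add_dependent_column [OF G herm fix_cols _ A_out])
  next
    case False
    then obtain i where "i < n" "c i \<noteq> 0" by blast
    then have "s \<noteq> 0"
      unfolding s_def by (rule sum_cnj_mult_self_nonzero)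
    moreover have "cnj s = s"
      by (simp only: s_def sum_cnj_mult_self complex_cnj_complex_of_real)
    moreover have "A i m = fmult n (fmult m A G) A i m + c i" for i
      by (simp add: c_def Q_def)
    ultimately show ?thesis
      by (intro inverse13_add_independent_column [OF G c_out herm fix_cols _ A_out orth])
  qed
qed

lemma inverse13_exists:
  "fbox n m A \<Longrightarrow>
     \<exists>G. fbox m n G \<and> fmult n (fmult m A G) A = A \<and> fadj (fmult m A G) = fmult m A G"
proof (induction m arbitrary: A)
  case 0
  then have "A = (\<lambda>i j. 0)"
    by (auto simp: fbox_def intro!: ext)
  then show ?case
    by (intro exI [of _ "\<lambda>i j. 0"]) (simp add: fbox_def fmult_def)
next
  case (Suc m)
  define A' where "A' = (\<lambda>i j. if j < m then A i j else 0)"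
  have "fbox n m A'"
    using Suc.prems by (auto simp: fbox_def A'_def)
  with Suc.IH obtain G where G: "fbox m n G"
    and G1: "fmult n (fmult m A' G) A' = A'" and G3: "fadj (fmult m A' G) = fmult m A' G"
    by blast
  have AG: "fmult m A' G = fmult m A G"
    by (auto simp: A'_def fmult_def intro!: ext sum.cong)
  have "fmult n (fmult m A G) A i j = A i j" if "j < m" for i j
    using fun_cong [OF fun_cong [OF G1, of i], of j] that
    by (simp add: AG A'_def fmult_def)
  with Suc.prems G G3 show ?case
    by (intro inverse13_add_column) (simp_all add: AG)
qed

definition fmat_penrose :: "nat \<Rightarrow> nat \<Rightarrow> cfmat \<Rightarrow> cfmat \<Rightarrow> bool" where
  "fmat_penrose n m A P \<longleftrightarrow>
     fmult n (fmult m A P) A = A \<and> fmult m (fmult n P A) P = P \<and>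
     fadj (fmult m A P) = fmult m A P \<and> fadj (fmult n P A) = fmult n P A"

(* P = K A G for a {1,3}-inverse G of A and a {1,4}-inverse K, the adjoint of a {1,3}-inverse
   of A^*. *)
lemma fmat_penrose_exists:
  assumes A: "fbox n m A"
  shows "\<exists>P. fbox m n P \<and> fmat_penrose n m A P"
proof -
  obtain G where G: "fbox m n G" and G1: "fmult n (fmult m A G) A = A"
    and G3: "fadj (fmult m A G) = fmult m A G"
    using inverse13_exists [OF A] by blast
  obtain H where H: "fbox n m H" and H1: "fmult m (fmult n (fadj A) H) (fadj A) = fadj A"
    and H3: "fadj (fmult n (fadj A) H) = fmult n (fadj A) H"
    using inverse13_exists [OF fbox_fadj [OF A]] by blast
  define K where "K = fadj H"
  have K1: "fmult n (fmult m A K) A = A"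
    using arg_cong [OF H1, of fadj] by (simp add: fadj_fmult K_def fmult_assoc)
  have KA: "fmult n K A = fmult n (fadj A) H"
    using H3 by (simp add: fadj_fmult K_def)
  define P where "P = fmult m (fmult n K A) G"
  have AP: "fmult m A P = fmult m A G"
    unfolding P_def using K1 by (metis fmult_assoc)
  have PA: "fmult n P A = fmult n K A"
    unfolding P_def using G1 by (simp add: fmult_assoc)
  have "fmult m (fmult n P A) P = fmult m (fmult n K (fmult m A (fmult n K A))) G"
    by (simp only: PA) (simp add: P_def fmult_assoc)
  also have "fmult m A (fmult n K A) = A"
    using K1 by (simp add: fmult_assoc)
  finally have P2: "fmult m (fmult n P A) P = P"
    by (simp add: P_def)
  have "fbox m n P"
    unfolding P_def using fbox_fmult [OF fbox_fmult [OF fbox_fadj [OF H] A] G] by (simp add: K_def)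
  then show ?thesis
    using AP PA G1 G3 H3 KA P2 by (auto simp: fmat_penrose_def)
qed

lemma invertible_mat_inverse:
  assumes M: "M \<in> carrier_mat n n" and "invertible_mat M"
  obtains Mi where "Mi \<in> carrier_mat n n" "M * Mi = 1\<^sub>m n" "Mi * M = 1\<^sub>m n"
proof -
  from assms obtain Mi where i1: "M * Mi = 1\<^sub>m n" and i2: "Mi * M = 1\<^sub>m (dim_row Mi)"
    unfolding invertible_mat_def inverts_mat_def using M by auto
  have "dim_col Mi = n"
    using arg_cong [OF i1, of dim_col] by simp
  moreover have "dim_row Mi = n"
    using arg_cong [OF i2, of dim_col] M by simp
  ultimately show ?thesis
    using i1 i2 by (intro that) auto
qed

definition penrose :: "complex mat \<Rightarrow> nat \<Rightarrow> nat \<Rightarrow> tensor \<Rightarrow> tensor \<Rightarrow> bool" where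
  "penrose M n1 n2 A W \<longleftrightarrow>
     mprod M n1 (mprod M n2 A W) A = A \<and> mprod M n2 (mprod M n1 W A) W = W \<and>
     tconj M (mprod M n2 A W) = mprod M n2 A W \<and> tconj M (mprod M n1 W A) = mprod M n1 W A"

locale invertible_transform =
  fixes M Mi :: "complex mat" and n3 :: nat
  assumes M: "M \<in> carrier_mat n3 n3" and Mi: "Mi \<in> carrier_mat n3 n3"
    and M_Mi: "M * Mi = 1\<^sub>m n3" and Mi_M: "Mi * M = 1\<^sub>m n3"
begin

lemma dim_row_M [simp]: "dim_row M = n3"
  using M by auto

lemma sum_M_Mi: "k < n3 \<Longrightarrow> p < n3 \<Longrightarrow> (\<Sum>l<n3. M $$ (k, l) * Mi $$ (l, p)) = of_bool (k = p)"
  using arg_cong [OF M_Mi, of "\<lambda>X. X $$ (k, p)"] M Mi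
  by (simp add: scalar_prod_def atLeast0LessThan)

lemma sum_Mi_M: "k < n3 \<Longrightarrow> p < n3 \<Longrightarrow> (\<Sum>l<n3. Mi $$ (k, l) * M $$ (l, p)) = of_bool (k = p)"
  using arg_cong [OF Mi_M, of "\<lambda>X. X $$ (k, p)"] M Mi
  by (simp add: scalar_prod_def atLeast0LessThan)

definition unhat :: "tensor \<Rightarrow> tensor" where
  "unhat F = (\<lambda>i j k. if k < n3 then (\<Sum>l<n3. Mi $$ (k, l) * F i j l) else 0)"

definition within_slices :: "tensor \<Rightarrow> bool" where
  "within_slices T \<longleftrightarrow> (\<forall>i j k. n3 \<le> k \<longrightarrow> T i j k = 0)"

lemma within_slices_unhat: "within_slices (unhat F)"
  by (simp add: within_slices_def unhat_def)

lemma tensor_hat_unhat: "k < n3 \<Longrightarrow> tensor_hat M (unhat F) i j k = F i j k"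
proof -
  assume k: "k < n3"
  have "tensor_hat M (unhat F) i j k = (\<Sum>l<n3. \<Sum>p<n3. M $$ (k, l) * (Mi $$ (l, p) * F i j p))"
    using k by (simp add: tensor_hat_def unhat_def sum_distrib_left)
  also have "\<dots> = (\<Sum>p<n3. (\<Sum>l<n3. M $$ (k, l) * Mi $$ (l, p)) * F i j p)"
    by (subst sum.swap) (simp add: sum_distrib_right mult.assoc)
  also have "\<dots> = F i j k"
    using k by (simp add: sum_M_Mi)
  finally show ?thesis .
qed

lemma unhat_tensor_hat: "within_slices T \<Longrightarrow> unhat (tensor_hat M T) = T"
proof (intro ext)
  fix i j k
  assume T: "within_slices T"
  show "unhat (tensor_hat M T) i j k = T i j k"
  proof (cases "k < n3")
    case True
    have "unhat (tensor_hat M T) i j k = (\<Sum>l<n3. \<Sum>p<n3. Mi $$ (k, l) * (M $$ (l, p) * T i j p))"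
      using True by (simp add: tensor_hat_def unhat_def sum_distrib_left)
    also have "\<dots> = (\<Sum>p<n3. (\<Sum>l<n3. Mi $$ (k, l) * M $$ (l, p)) * T i j p)"
      by (subst sum.swap) (simp add: sum_distrib_right mult.assoc)
    also have "\<dots> = T i j k"
      using True by (simp add: sum_Mi_M)
    finally show ?thesis .
  qed (use T in \<open>simp add: unhat_def within_slices_def\<close>)
qed

definition hslice :: "tensor \<Rightarrow> nat \<Rightarrow> cfmat" where
  "hslice T k = (\<lambda>i j. tensor_hat M T i j k)"

lemma tensor_eqI:
  assumes "within_slices T" "within_slices S" and "\<And>k. k < n3 \<Longrightarrow> hslice T k = hslice S k"
  shows "T = S"
proof -
  have "tensor_hat M T i j k = tensor_hat M S i j k" if "k < n3" for i j k
    using assms(3) [OF that] by (simp add: hslice_def fun_eq_iff)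
  then have "unhat (tensor_hat M T) = unhat (tensor_hat M S)"
    by (auto simp: unhat_def intro!: ext sum.cong)
  then show ?thesis
    using assms(1,2) by (simp add: unhat_tensor_hat)
qed

lemma mprod_eq_unhat:
  "mprod M n C D = unhat (\<lambda>i j k. \<Sum>t<n. tensor_hat M C i t k * tensor_hat M D t j k)"
  unfolding mprod_def
proof (rule the_equality)
  fix W
  assume "(\<forall>i j k. dim_row M \<le> k \<longrightarrow> W i j k = 0) \<and> (\<forall>i j k. k < dim_row M \<longrightarrow>
    tensor_hat M W i j k = (\<Sum>t<n. tensor_hat M C i t k * tensor_hat M D t j k))"
  then show "W = unhat (\<lambda>i j k. \<Sum>t<n. tensor_hat M C i t k * tensor_hat M D t j k)"
    by (intro tensor_eqI)
      (auto simp: within_slices_def within_slices_unhat [unfolded within_slices_def]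
        hslice_def tensor_hat_unhat)
qed (simp add: tensor_hat_unhat within_slices_unhat [unfolded within_slices_def])

lemma tconj_eq_unhat: "tconj M A = unhat (\<lambda>i j k. cnj (tensor_hat M A j i k))"
  unfolding tconj_def
proof (rule the_equality)
  fix W
  assume "(\<forall>i j k. dim_row M \<le> k \<longrightarrow> W i j k = 0) \<and>
    (\<forall>i j k. k < dim_row M \<longrightarrow> tensor_hat M W i j k = cnj (tensor_hat M A j i k))"
  then show "W = unhat (\<lambda>i j k. cnj (tensor_hat M A j i k))"
    by (intro tensor_eqI)
      (auto simp: within_slices_def within_slices_unhat [unfolded within_slices_def]
        hslice_def tensor_hat_unhat)
qed (simp add: tensor_hat_unhat within_slices_unhat [unfolded within_slices_def])

lemma within_slices_mprod: "within_slices (mprod M n C D)"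
  by (simp add: mprod_eq_unhat within_slices_unhat)

lemma within_slices_tconj: "within_slices (tconj M A)"
  by (simp add: tconj_eq_unhat within_slices_unhat)

lemma within_slices_tensor_in: "tensor_in a b n3 T \<Longrightarrow> within_slices T"
  by (simp add: tensor_in_def within_slices_def)

lemma hslice_mprod: "k < n3 \<Longrightarrow> hslice (mprod M n C D) k = fmult n (hslice C k) (hslice D k)"
  by (simp add: mprod_eq_unhat hslice_def tensor_hat_unhat fmult_def)

lemma hslice_tconj: "k < n3 \<Longrightarrow> hslice (tconj M A) k = fadj (hslice A k)"
  by (simp add: tconj_eq_unhat hslice_def tensor_hat_unhat fadj_def)

lemma fbox_hslice: "tensor_in a b n3 T \<Longrightarrow> fbox a b (hslice T k)"
  by (auto simp: tensor_in_def fbox_def hslice_def tensor_hat_def)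

lemma mprod_assoc: "mprod M l (mprod M k A B) C = mprod M k A (mprod M l B C)"
  by (rule tensor_eqI) (simp_all add: within_slices_mprod hslice_mprod fmult_assoc)

lemma tconj_mprod: "tconj M (mprod M k C D) = mprod M k (tconj M D) (tconj M C)"
  by (rule tensor_eqI)
    (simp_all add: within_slices_mprod within_slices_tconj hslice_mprod hslice_tconj fadj_fmult)

lemma penrose_exists:
  assumes A: "tensor_in n1 n2 n3 A"
  shows "\<exists>W. tensor_in n2 n1 n3 W \<and> penrose M n1 n2 A W"
proof -
  define P where "P k = (SOME P. fbox n2 n1 P \<and> fmat_penrose n1 n2 (hslice A k) P)" for k
  have P: "fbox n2 n1 (P k) \<and> fmat_penrose n1 n2 (hslice A k) (P k)" for k
    unfolding P_def by (rule someI_ex [OF fmat_penrose_exists [OF fbox_hslice [OF A]]])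
  define W where "W = unhat (\<lambda>i j k. P k i j)"
  have hslice_W: "hslice W k = P k" if "k < n3" for k
    using that by (simp add: W_def hslice_def tensor_hat_unhat)
  have W: "tensor_in n2 n1 n3 W"
    using P by (auto simp: tensor_in_def W_def unhat_def fbox_def)
  have "penrose M n1 n2 A W"
    unfolding penrose_def
    using P within_slices_tensor_in [OF A] within_slices_tensor_in [OF W]
    by (intro conjI tensor_eqI)
      (simp_all add: fmat_penrose_def within_slices_mprod within_slices_tconj
        hslice_mprod hslice_tconj hslice_W)
  with W show ?thesis
    by blast
qed

lemma penrose_unique:
  assumes "penrose M n1 n2 A W" and "penrose M n1 n2 A V"
  shows "W = V"
proof -
  let ?T = "tconj M" and ?p = "mprod M"
  from assms have W1: "?p n1 (?p n2 A W) A = A" and W2: "?p n2 (?p n1 W A) W = W"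
    and W3: "?T (?p n2 A W) = ?p n2 A W" and W4: "?T (?p n1 W A) = ?p n1 W A"
    and V1: "?p n1 (?p n2 A V) A = A" and V2: "?p n2 (?p n1 V A) V = V"
    and V3: "?T (?p n2 A V) = ?p n2 A V" and V4: "?T (?p n1 V A) = ?p n1 V A"
    by (simp_all add: penrose_def)
  have TA_AV: "?p n1 (?T A) (?p n2 A V) = ?T A"
    using arg_cong [OF V1, of ?T] V3 by (simp add: tconj_mprod)
  have "?T A = ?T (?p n2 A (?p n1 W A))"
    using W1 by (simp add: mprod_assoc)
  also have "\<dots> = ?p n2 (?T (?p n1 W A)) (?T A)"
    by (rule tconj_mprod)
  also have "\<dots> = ?p n2 (?p n1 W A) (?T A)"
    by (simp only: W4)
  finally have WA_TA: "?p n2 (?p n1 W A) (?T A) = ?T A" ..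
  have W_eq: "W = ?p n2 (?p n1 W (?T W)) (?T A)"
    using W2 W3 by (metis mprod_assoc tconj_mprod)
  have V_eq: "V = ?p n1 (?T A) (?p n2 (?T V) V)"
    using V2 V4 by (metis mprod_assoc tconj_mprod)
  have "W = ?p n2 (?p n1 W (?T W)) (?p n1 (?T A) (?p n2 A V))"
    by (subst TA_AV) (rule W_eq)
  also have "\<dots> = ?p n1 (?p n2 (?p n1 W (?T W)) (?T A)) (?p n2 A V)"
    by (simp only: mprod_assoc)
  also have "\<dots> = ?p n1 W (?p n2 A V)"
    by (simp only: W_eq [symmetric])
  finally have W_mid: "W = ?p n1 W (?p n2 A V)" .
  have "V = ?p n1 (?p n2 (?p n1 W A) (?T A)) (?p n2 (?T V) V)"
    by (subst WA_TA) (rule V_eq)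
  also have "\<dots> = ?p n2 (?p n1 W A) (?p n1 (?T A) (?p n2 (?T V) V))"
    by (simp only: mprod_assoc)
  also have "\<dots> = ?p n1 W (?p n2 A V)"
    by (simp only: V_eq [symmetric] mprod_assoc)
  finally show ?thesis
    using W_mid by simp
qed

lemma mp_inv_penrose:
  assumes "tensor_in n1 n2 n3 A"
  shows "penrose M n1 n2 A (mp_inv M n1 n2 A)"
proof -
  obtain W where "tensor_in n2 n1 n3 W" "penrose M n1 n2 A W"
    using penrose_exists [OF assms] by blast
  then have "mp_inv M n1 n2 A = W"
    unfolding mp_inv_def penrose_def [symmetric] dim_row_M
    by (blast intro: the_equality penrose_unique)
  with \<open>penrose M n1 n2 A W\<close> show ?thesis
    by simp
qed

context
  fixes n1 n2 :: nat and A Ad Am :: tensor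
  assumes Ad: "penrose M n1 n2 A Ad" and Am: "mprod M n1 (mprod M n2 A Am) A = A"
begin

lemma tconj_mprod_A_Ad: "mprod M n1 (tconj M A) (mprod M n2 A Ad) = tconj M A"
  using arg_cong [OF Ad [unfolded penrose_def, THEN conjunct1], of "tconj M"] Ad
  by (simp add: penrose_def tconj_mprod)

lemma mprod_tconj_A_tconj_Ad: "mprod M n1 (tconj M A) (tconj M Ad) = mprod M n1 Ad A"
  using Ad by (simp add: penrose_def tconj_mprod)

lemma mprod_A_Ad_eq_tconj: "mprod M n2 A Ad = mprod M n2 (tconj M Ad) (tconj M A)"
  using Ad by (simp add: penrose_def tconj_mprod)

lemma mprod_A_Ad_A: "mprod M n2 A (mprod M n1 Ad A) = A"
  using Ad by (simp add: penrose_def mprod_assoc)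

lemma mprod_A_Am_A: "mprod M n2 A (mprod M n1 Am (mprod M n2 A Z)) = mprod M n2 A Z"
  using arg_cong [OF Am, of "\<lambda>B. mprod M n2 B Z"] by (simp add: mprod_assoc)

lemma eq_Am_A_tconj_iff_mprod_tconj_mp:
  "X = mprod M n2 (mprod M n1 Am A) (tconj M A) \<longleftrightarrow>
     mprod M n2 (mprod M n1 X A) Ad = X \<and> mprod M n1 X (tconj M Ad) = mprod M n1 Am A"
proof (intro iffI; (elim conjE)?)
  assume X: "X = mprod M n2 (mprod M n1 Am A) (tconj M A)"
  show "mprod M n2 (mprod M n1 X A) Ad = X \<and> mprod M n1 X (tconj M Ad) = mprod M n1 Am A"
    unfolding X by (simp add: mprod_assoc tconj_mprod_A_Ad mprod_tconj_A_tconj_Ad mprod_A_Ad_A)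
next
  assume X_A_Ad: "mprod M n2 (mprod M n1 X A) Ad = X"
    and X_Ad: "mprod M n1 X (tconj M Ad) = mprod M n1 Am A"
  have "X = mprod M n1 X (mprod M n2 A Ad)"
    using X_A_Ad by (simp add: mprod_assoc)
  also have "mprod M n1 X (mprod M n2 A Ad) = mprod M n2 (mprod M n1 X (tconj M Ad)) (tconj M A)"
    by (simp add: mprod_A_Ad_eq_tconj mprod_assoc)
  finally show "X = mprod M n2 (mprod M n1 Am A) (tconj M A)"
    by (simp only: X_Ad)
qed

lemma eq_Am_A_tconj_iff_mprod_A:
  "X = mprod M n2 (mprod M n1 Am A) (tconj M A) \<longleftrightarrow>
     mprod M n2 (mprod M n1 X A) Ad = X \<and>
     mprod M n1 X A = mprod M n1 (mprod M n2 (mprod M n1 Am A) (tconj M A)) A"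
  by (metis eq_Am_A_tconj_iff_mprod_tconj_mp)

lemma eq_Am_A_tconj_iff_two_sided:
  "X = mprod M n2 (mprod M n1 Am A) (tconj M A) \<longleftrightarrow>
     mprod M n2 (mprod M n1 (mprod M n2 (mprod M n1 Am A) X) A) Ad = X \<and>
     mprod M n1 (mprod M n2 A X) (tconj M Ad) = A"
proof (intro iffI; (elim conjE)?)
  assume X: "X = mprod M n2 (mprod M n1 Am A) (tconj M A)"
  show "mprod M n2 (mprod M n1 (mprod M n2 (mprod M n1 Am A) X) A) Ad = X \<and>
      mprod M n1 (mprod M n2 A X) (tconj M Ad) = A"
    unfolding X
    by (simp add: mprod_assoc tconj_mprod_A_Ad mprod_tconj_A_tconj_Ad mprod_A_Ad_A mprod_A_Am_A)
next
  assume Am_A_X_A_Ad: "mprod M n2 (mprod M n1 (mprod M n2 (mprod M n1 Am A) X) A) Ad = X"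
    and AX_Ad: "mprod M n1 (mprod M n2 A X) (tconj M Ad) = A"
  have "X = mprod M n1 Am (mprod M n2 A (mprod M n1 X (mprod M n2 A Ad)))"
    using Am_A_X_A_Ad by (simp add: mprod_assoc)
  also have "mprod M n1 Am (mprod M n2 A (mprod M n1 X (mprod M n2 A Ad)))
      = mprod M n1 Am (mprod M n2 (mprod M n1 (mprod M n2 A X) (tconj M Ad)) (tconj M A))"
    by (simp add: mprod_A_Ad_eq_tconj mprod_assoc)
  finally show "X = mprod M n2 (mprod M n1 Am A) (tconj M A)"
    by (simp only: AX_Ad) (simp add: mprod_assoc)
qed

end

end

theorem theorem3p13:
  fixes M :: "complex mat" and n1 n2 n3 :: nat and A Am X :: tensor
  assumes M: "M \<in> carrier_mat n3 n3" and Minv: "invertible_mat M"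
    and A: "tensor_in n1 n2 n3 A"
    and Am: "Am \<in> inner1 M n1 n2 A"
    and X: "tensor_in n2 n1 n3 X"
  defines "Ad \<equiv> mp_inv M n1 n2 A"
  shows
   "((X = mprod M n2 (mprod M n1 Am A) (tconj M A))
    \<longleftrightarrow> (mprod M n2 (mprod M n1 X A) Ad = X \<and>
         mprod M n1 X (tconj M Ad) = mprod M n1 Am A))
    \<and>
   ((X = mprod M n2 (mprod M n1 Am A) (tconj M A))
    \<longleftrightarrow> (mprod M n2 (mprod M n1 X A) Ad = X \<and>
         mprod M n1 X A = mprod M n1 (mprod M n2 (mprod M n1 Am A) (tconj M A)) A))
    \<and>
   ((X = mprod M n2 (mprod M n1 Am A) (tconj M A))
    \<longleftrightarrow> (mprod M n2 (mprod M n1 (mprod M n2 (mprod M n1 Am A) X) A) Ad = X \<and>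
         mprod M n1 (mprod M n2 A X) (tconj M Ad) = A))"
proof -
  obtain Mi where "invertible_transform M Mi n3"
    using invertible_mat_inverse [OF M Minv] M by (metis invertible_transform.intro)
  then interpret invertible_transform M Mi n3 .
  have Ad_mp: "penrose M n1 n2 A Ad"
    unfolding Ad_def using A by (rule mp_inv_penrose)
  have Am_inner: "mprod M n1 (mprod M n2 A Am) A = A"
    using Am by (simp add: inner1_def)
  show ?thesis
    by (intro conjI eq_Am_A_tconj_iff_mprod_tconj_mp [OF Ad_mp Am_inner]
        eq_Am_A_tconj_iff_mprod_A [OF Ad_mp Am_inner] eq_Am_A_tconj_iff_two_sided [OF Ad_mp Am_inner])
qed

end
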